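(* Suppose $\|\widehat\theta_t-\theta^*\|_{\Sigma_t}\le\beta_t$ for all $t\in[T]$ (with $\|\theta^*\|_2\le L_\theta$). Then for each episode $k$ of \texttt{UCMNLK} and each $t$ with $t_k\le t<t_{k+1}-1$, $Q_k(s_t,a_t)\le r(s_t,a_t)+\gamma\max_{p\in\mathcal P_{t_k}}\big\{\sum_{s'\in\mathcal S_{s_t,a_t}}p_{s_t,a_t,s'}V_k(s')\big\}+\gamma^N$, where $V_k(s)=\max_{a}Q_k(s,a)$.
   Context: Setting: finite $\mathcal S,\mathcal A$, reward $r\in[0,1]$, MNL transitions $p(s'\mid s,a,\theta^* )$ with $p(s'\mid s,a,\theta)=\exp(\varphi(s,a,s')^\top\theta)/\sum_{s''\in\mathcal S_{s,a}}\exp(\varphi(s,a,s'')^\top\theta)$ on known reachable sets $\mathcal S_{s,a}$, features $\varphi\in\mathbb R^d$. \texttt{UCMNLK} with discount $\gamma\in[0,1)$ and $N$ rounds: $\widehat\theta_t,\Sigma_t$ are the online estimates (online Newton-type update of the multinomial log-loss, $\Sigma_1=\lambda I_d$, $\Sigma_{t+1}=\Sigma_t+\nabla^2\ell_t(\widehat\theta_{t+1})$); $\mathcal P_t$ is the set of $p\in[0,1]^{\mathcal S\times\mathcal A\times\mathcal S}$ with $\sum_{s'\in\mathcal S_{s,a}}p_{s,a,s'}=1$ and $\sum_{s'\in\mathcal S_{s,a}}|p_{s,a,s'}-p(s'\mid s,a,\widehat\theta_t)|\le B^{1,t}_{s,a}+B^{2,t}_{s,a}$ for all $(s,a)$, where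 $B^{1,t}_{s,a}=\beta_t\sum_{s'}p(s'\mid s,a,\widehat\theta_t)\|\varphi(s,a,s')-\sum_{s''}p(s''\mid s,a,\widehat\theta_t)\varphi(s,a,s'')\|_{\Sigma_t^{-1}}$ and $B^{2,t}_{s,a}=3\beta_t^2\max_{s'}\|\varphi(s,a,s')\|^2_{\Sigma_t^{-1}}$, $\beta_t>0$ the confidence radius. Episode $k$ starts at $t_k$; $Q_k=\texttt{DEVI}(\gamma,\mathcal P_{t_k},N)$ where \texttt{DEVI} sets $Q^{(0)}\equiv1/(1-\gamma)$, $V^{(n-1)}(s)=\max_aQ^{(n-1)}(s,a)$, $Q^{(n)}(s,a)=r(s,a)+\gamma\max_{p\in\mathcal P}\sum_{s'\in\mathcal S_{s,a}}p_{s,a,s'}V^{(n-1)}(s')$ and returns $Q^{(N)}$; actions $a_t=\pi_k(s_t)\in\arg\max_aQ_k(s_t,a)$; the episode ends (new episode starts at $t_{k+1}$) once $\det\Sigma_t>2\det\Sigma_{t_k}$. *)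

theory Defs
  imports "HOL-Analysis.Analysis"
begin

definition mnl_prob ::
  "('s \<Rightarrow> 'a \<Rightarrow> 's \<Rightarrow> real^'d) \<Rightarrow> ('s \<Rightarrow> 'a \<Rightarrow> 's set) \<Rightarrow> real^'d \<Rightarrow> 's \<Rightarrow> 'a \<Rightarrow> 's \<Rightarrow> real" where
  "mnl_prob \<phi> Sset \<theta> s a s' =
     exp (\<phi> s a s' \<bullet> \<theta>) / (\<Sum>s''\<in>Sset s a. exp (\<phi> s a s'' \<bullet> \<theta>))"

definition wnorm :: "real^'d^'d \<Rightarrow> real^'d \<Rightarrow> real" where
  "wnorm M x = sqrt (x \<bullet> (M *v x))"

definition outer :: "real^'d \<Rightarrow> real^'d \<Rightarrow> real^'d^'d" where
  "outer x y = (\<chi> i j. x $ i * y $ j)"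

definition mean_feat ::
  "('s \<Rightarrow> 'a \<Rightarrow> 's \<Rightarrow> real^'d) \<Rightarrow> ('s \<Rightarrow> 'a \<Rightarrow> 's set) \<Rightarrow> real^'d \<Rightarrow> 's \<Rightarrow> 'a \<Rightarrow> real^'d" where
  "mean_feat \<phi> Sset \<theta> s a = (\<Sum>s''\<in>Sset s a. mnl_prob \<phi> Sset \<theta> s a s'' *\<^sub>R \<phi> s a s'')"

text \<open>Hessian of the multinomial log-loss at (s,a) (independent of the observed next state).\<close>
definition mnl_hessian ::
  "('s \<Rightarrow> 'a \<Rightarrow> 's \<Rightarrow> real^'d) \<Rightarrow> ('s \<Rightarrow> 'a \<Rightarrow> 's set) \<Rightarrow> real^'d \<Rightarrow> 's \<Rightarrow> 'a \<Rightarrow> real^'d^'d" where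
  "mnl_hessian \<phi> Sset \<theta> s a =
     (\<Sum>s'\<in>Sset s a. mnl_prob \<phi> Sset \<theta> s a s' *\<^sub>R outer (\<phi> s a s') (\<phi> s a s'))
     - outer (mean_feat \<phi> Sset \<theta> s a) (mean_feat \<phi> Sset \<theta> s a)"

definition bonus1 ::
  "('s \<Rightarrow> 'a \<Rightarrow> 's \<Rightarrow> real^'d) \<Rightarrow> ('s \<Rightarrow> 'a \<Rightarrow> 's set) \<Rightarrow> real^'d \<Rightarrow> real^'d^'d \<Rightarrow> real \<Rightarrow> 's \<Rightarrow> 'a \<Rightarrow> real" where
  "bonus1 \<phi> Sset \<theta> \<Sigma> \<beta> s a =
     \<beta> * (\<Sum>s'\<in>Sset s a. mnl_prob \<phi> Sset \<theta> s a s' *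
            wnorm (matrix_inv \<Sigma>) (\<phi> s a s' - mean_feat \<phi> Sset \<theta> s a))"

definition bonus2 ::
  "('s \<Rightarrow> 'a \<Rightarrow> 's \<Rightarrow> real^'d) \<Rightarrow> ('s \<Rightarrow> 'a \<Rightarrow> 's set) \<Rightarrow> real^'d^'d \<Rightarrow> real \<Rightarrow> 's \<Rightarrow> 'a \<Rightarrow> real" where
  "bonus2 \<phi> Sset \<Sigma> \<beta> s a =
     3 * \<beta>\<^sup>2 * Max ((\<lambda>s'. (wnorm (matrix_inv \<Sigma>) (\<phi> s a s'))\<^sup>2) ` Sset s a)"

definition conf_set ::
  "('s \<Rightarrow> 'a \<Rightarrow> 's \<Rightarrow> real^'d) \<Rightarrow> ('s \<Rightarrow> 'a \<Rightarrow> 's set) \<Rightarrow> real^'d \<Rightarrow> real^'d^'d \<Rightarrow> real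
     \<Rightarrow> ('s \<Rightarrow> 'a \<Rightarrow> 's \<Rightarrow> real) set" where
  "conf_set \<phi> Sset \<theta> \<Sigma> \<beta> =
     {p. (\<forall>s a s'. 0 \<le> p s a s' \<and> p s a s' \<le> 1)
       \<and> (\<forall>s a. (\<Sum>s'\<in>Sset s a. p s a s') = 1)
       \<and> (\<forall>s a. (\<Sum>s'\<in>Sset s a. \<bar>p s a s' - mnl_prob \<phi> Sset \<theta> s a s'\<bar>)
                 \<le> bonus1 \<phi> Sset \<theta> \<Sigma> \<beta> s a + bonus2 \<phi> Sset \<Sigma> \<beta> s a)}"

definition Vof :: "('s \<Rightarrow> 'a::finite \<Rightarrow> real) \<Rightarrow> 's \<Rightarrow> real" where
  "Vof Q s = Max (range (Q s))"

definition opt_backup ::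
  "('s \<Rightarrow> 'a \<Rightarrow> 's \<Rightarrow> real) set \<Rightarrow> ('s \<Rightarrow> 'a \<Rightarrow> 's set) \<Rightarrow> ('s \<Rightarrow> real) \<Rightarrow> 's \<Rightarrow> 'a \<Rightarrow> real" where
  "opt_backup P Sset V s a = (SUP p\<in>P. \<Sum>s'\<in>Sset s a. p s a s' * V s')"

text \<open>DEVI: the iterates Q^{(n)}; DEVI(gamma,P,N) returns devi_Q gamma P Sset r N.\<close>
primrec devi_Q ::
  "real \<Rightarrow> ('s \<Rightarrow> 'a::finite \<Rightarrow> 's \<Rightarrow> real) set \<Rightarrow> ('s \<Rightarrow> 'a \<Rightarrow> 's set) \<Rightarrow> ('s \<Rightarrow> 'a \<Rightarrow> real)
     \<Rightarrow> nat \<Rightarrow> 's \<Rightarrow> 'a \<Rightarrow> real" where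
  "devi_Q \<gamma> P Sset r 0 = (\<lambda>s a. 1 / (1 - \<gamma>))"
| "devi_Q \<gamma> P Sset r (Suc n) =
     (\<lambda>s a. r s a + \<gamma> * opt_backup P Sset (Vof (devi_Q \<gamma> P Sset r n)) s a)"

end

theory Submission
  imports Defs
begin

text \<open>The inequality is the truncation error of value iteration after \<open>N\<close> steps. Since
  \<open>P\<^sub>t\<^sub>k\<close> consists of stochastic kernels, the optimistic backup is monotone and shifts constants
  through, so \<open>Q^(n) \<le> Q^(n+1) + \<gamma>^n\<close> by induction on \<open>n\<close>, starting from \<open>r \<ge> 0\<close> and
  \<open>1/(1-\<gamma>) = \<gamma>/(1-\<gamma>) + 1\<close>; for \<open>n = N\<close> the right-hand side is exactly \<open>Q^(N+1) + \<gamma>^N\<close>.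
  This needs \<open>P\<^sub>t\<^sub>k \<noteq> {}\<close>, as a supremum over the empty set is junk: \<open>P\<^sub>t\<^sub>k\<close> contains the MNL
  kernel at \<open>\<theta>\<^sub>t\<^sub>k\<close> because both bonuses are nonnegative, \<open>\<Sigma>\<^sub>t \<succeq> \<lambda>I\<close> being positive definite as
  every MNL Hessian is a covariance matrix.\<close>

definition stochastic_kernels :: "('s \<Rightarrow> 'a \<Rightarrow> 's set) \<Rightarrow> ('s \<Rightarrow> 'a \<Rightarrow> 's \<Rightarrow> real) set \<Rightarrow> bool" where
  "stochastic_kernels Sset P \<longleftrightarrow>
     (\<forall>p\<in>P. (\<forall>s a s'. 0 \<le> p s a s' \<and> p s a s' \<le> 1) \<and> (\<forall>s a. (\<Sum>s'\<in>Sset s a. p s a s') = 1))"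

lemma stochastic_kernels_conf_set: "stochastic_kernels Sset (conf_set \<phi> Sset \<theta> \<Sigma> \<beta>)"
  unfolding stochastic_kernels_def conf_set_def by blast

lemma Vof_le_plus:
  fixes Q Q' :: "'s \<Rightarrow> 'a::finite \<Rightarrow> real"
  assumes "\<And>a. Q s a \<le> Q' s a + c"
  shows "Vof Q s \<le> Vof Q' s + c"
proof -
  have "Vof Q s \<in> range (Q s)"
    unfolding Vof_def by (rule Max_in) auto
  then obtain a where a: "Vof Q s = Q s a"
    by auto
  have "Q' s a \<le> Vof Q' s"
    unfolding Vof_def by (intro Max_ge) auto
  then show ?thesis using assms[of a] a by linarith
qed

lemma opt_backup_const:
  assumes "P \<noteq> {}" "stochastic_kernels Sset P"
  shows "opt_backup P Sset (\<lambda>_. c) s a = c"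
proof -
  have "(\<Sum>s'\<in>Sset s a. p s a s' * c) = c" if "p \<in> P" for p
    using assms(2) that by (simp add: stochastic_kernels_def flip: sum_distrib_right)
  then have "(\<lambda>p. \<Sum>s'\<in>Sset s a. p s a s' * c) ` P = {c}"
    using assms(1) by auto
  then show ?thesis
    unfolding opt_backup_def by simp
qed

lemma opt_backup_le_plus:
  assumes "P \<noteq> {}" "stochastic_kernels Sset P"
    and le: "\<And>s'. V s' \<le> W s' + c"
  shows "opt_backup P Sset V s a \<le> opt_backup P Sset W s a + c"
  unfolding opt_backup_def
proof (rule cSUP_least[OF assms(1)])
  fix p assume "p \<in> P"
  then have p01: "\<And>s'. 0 \<le> p s a s' \<and> p s a s' \<le> 1" and sum1: "(\<Sum>s'\<in>Sset s a. p s a s') = 1"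
    using assms(2) by (auto simp: stochastic_kernels_def)
  have "bdd_above ((\<lambda>p. \<Sum>s'\<in>Sset s a. p s a s' * W s') ` P)"
  proof (rule bdd_aboveI2)
    fix q assume "q \<in> P"
    then have "\<And>s'. 0 \<le> q s a s' \<and> q s a s' \<le> 1"
      using assms(2) by (auto simp: stochastic_kernels_def)
    then have "q s a s' * W s' \<le> \<bar>W s'\<bar>" for s'
      using mult_left_mono[OF abs_ge_self, of "q s a s'" "W s'"]
        mult_left_le_one_le[OF abs_ge_zero, of "q s a s'" "W s'"] by simp
    then show "(\<Sum>s'\<in>Sset s a. q s a s' * W s') \<le> (\<Sum>s'\<in>Sset s a. \<bar>W s'\<bar>)"
      by (intro sum_mono)
  qed
  then have "(\<Sum>s'\<in>Sset s a. p s a s' * W s') \<le> (SUP q\<in>P. \<Sum>s'\<in>Sset s a. q s a s' * W s')"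
    using \<open>p \<in> P\<close> by (rule cSUP_upper2) simp
  moreover have "(\<Sum>s'\<in>Sset s a. p s a s' * V s') \<le> (\<Sum>s'\<in>Sset s a. p s a s' * (W s' + c))"
    using p01 le by (intro sum_mono mult_left_mono) auto
  moreover have "(\<Sum>s'\<in>Sset s a. p s a s' * (W s' + c)) = (\<Sum>s'\<in>Sset s a. p s a s' * W s') + c"
    by (simp add: distrib_left sum.distrib sum1 flip: sum_distrib_right)
  ultimately show "(\<Sum>s'\<in>Sset s a. p s a s' * V s') \<le> (SUP q\<in>P. \<Sum>s'\<in>Sset s a. q s a s' * W s') + c"
    by linarith
qed

lemma devi_Q_le_Suc_plus:
  assumes "P \<noteq> {}" "stochastic_kernels Sset P"
    and r_nonneg: "\<And>s a. 0 \<le> r s a" and "0 \<le> \<gamma>" "\<gamma> < 1"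
  shows "devi_Q \<gamma> P Sset r n s a \<le> devi_Q \<gamma> P Sset r (Suc n) s a + \<gamma> ^ n"
proof (induction n arbitrary: s a)
  case 0
  have "Vof (devi_Q \<gamma> P Sset r 0) = (\<lambda>_. 1 / (1 - \<gamma>))"
    by (simp add: Vof_def fun_eq_iff)
  then have "devi_Q \<gamma> P Sset r (Suc 0) s a = r s a + \<gamma> / (1 - \<gamma>)"
    using opt_backup_const[OF assms(1,2)] by simp
  moreover have "1 / (1 - \<gamma>) = \<gamma> / (1 - \<gamma>) + 1"
    using \<open>\<gamma> < 1\<close> by (simp add: field_simps)
  ultimately show ?case
    using r_nonneg[of s a] by simp
next
  case (Suc n)
  let ?Q = "devi_Q \<gamma> P Sset r"
  have "Vof (?Q n) s' \<le> Vof (?Q (Suc n)) s' + \<gamma> ^ n" for s'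
    by (rule Vof_le_plus) (rule Suc.IH)
  then have "opt_backup P Sset (Vof (?Q n)) s a \<le> opt_backup P Sset (Vof (?Q (Suc n))) s a + \<gamma> ^ n"
    by (rule opt_backup_le_plus[OF assms(1,2)])
  then have "\<gamma> * opt_backup P Sset (Vof (?Q n)) s a
      \<le> \<gamma> * opt_backup P Sset (Vof (?Q (Suc n))) s a + \<gamma> ^ Suc n"
    using mult_left_mono[OF _ \<open>0 \<le> \<gamma>\<close>] by (fastforce simp: distrib_left)
  then show ?case
    by simp
qed

lemma mnl_prob_nonneg: "0 \<le> mnl_prob \<phi> Sset \<theta> s a s'"
  unfolding mnl_prob_def by (intro divide_nonneg_nonneg sum_nonneg) auto

lemma sum_mnl_prob:
  assumes "finite (Sset s a)" "Sset s a \<noteq> {}"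
  shows "(\<Sum>s'\<in>Sset s a. mnl_prob \<phi> Sset \<theta> s a s') = 1"
proof -
  have "0 < (\<Sum>s''\<in>Sset s a. exp (\<phi> s a s'' \<bullet> \<theta>))"
    using assms by (intro sum_pos) auto
  then show ?thesis
    unfolding mnl_prob_def by (simp flip: sum_divide_distrib)
qed

lemma mnl_prob_le_1:
  assumes "finite (Sset s a)" "s' \<in> Sset s a"
  shows "mnl_prob \<phi> Sset \<theta> s a s' \<le> 1"
proof -
  have "mnl_prob \<phi> Sset \<theta> s a s' \<le> (\<Sum>s''\<in>Sset s a. mnl_prob \<phi> Sset \<theta> s a s'')"
    using assms by (intro member_le_sum) (auto simp: mnl_prob_nonneg)
  also have "\<dots> = 1"
    using assms by (intro sum_mnl_prob) auto
  finally show ?thesis .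
qed

lemma outer_mult_vec: "outer u v *v x = (v \<bullet> x) *\<^sub>R u"
  by (simp add: vec_eq_iff outer_def matrix_vector_mult_def inner_vec_def sum_distrib_left mult_ac)

lemma sum_matrix_vector_mult: "(\<Sum>i\<in>I. M i) *v x = (\<Sum>i\<in>I. M i *v x)"
  by (induction I rule: infinite_finite_induct) (auto simp: matrix_vector_mult_add_rdistrib)

text \<open>The quadratic form is the variance of \<open>\<phi> \<bullet> x\<close> under the MNL distribution.\<close>
lemma mnl_hessian_psd:
  assumes "finite (Sset s a)" "Sset s a \<noteq> {}"
  shows "0 \<le> x \<bullet> (mnl_hessian \<phi> Sset \<theta> s a *v x)"
proof -
  let ?p = "mnl_prob \<phi> Sset \<theta> s a" and ?y = "\<lambda>s'. \<phi> s a s' \<bullet> x"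
  have "(\<Sum>s'\<in>Sset s a. ?p s' *\<^sub>R ?y s')\<^sup>2 \<le> (\<Sum>s'\<in>Sset s a. ?p s' * (?y s')\<^sup>2)"
    by (rule convex_on_sum[OF assms convex_power2])
      (auto simp: sum_mnl_prob[of Sset s a, OF assms] mnl_prob_nonneg)
  then show ?thesis
    by (simp add: mnl_hessian_def mean_feat_def matrix_vector_mult_diff_rdistrib inner_diff_right
        sum_matrix_vector_mult outer_mult_vec inner_sum_left inner_sum_right inner_commute
        power2_eq_square mult_ac flip: scaleR_matrix_vector_assoc)
qed

lemma matrix_inv_psd_if_pos_def:
  fixes M :: "real^'n^'n"
  assumes pos: "\<And>y. y \<noteq> 0 \<Longrightarrow> 0 < y \<bullet> (M *v y)"
  shows "0 \<le> x \<bullet> (matrix_inv M *v x)"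
proof -
  have "\<forall>y. M *v y = 0 \<longrightarrow> y = 0"
    using pos by force
  then have "invertible M"
    using matrix_left_invertible_ker invertible_left_inverse by blast
  then have "M ** matrix_inv M = mat 1"
    unfolding invertible_def matrix_inv_def by (rule someI2_ex) auto
  then have "x = M *v (matrix_inv M *v x)"
    by (simp add: matrix_vector_mul_assoc)
  then have "x \<bullet> (matrix_inv M *v x) = (matrix_inv M *v x) \<bullet> (M *v (matrix_inv M *v x))"
    by (metis inner_commute)
  then show ?thesis
    using pos[of "matrix_inv M *v x"] by (cases "matrix_inv M *v x = 0") auto
qed

lemma bonus1_nonneg:
  assumes "0 \<le> \<beta>" "\<And>x. 0 \<le> x \<bullet> (matrix_inv \<Sigma> *v x)"
  shows "0 \<le> bonus1 \<phi> Sset \<theta> \<Sigma> \<beta> s a"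
  unfolding bonus1_def wnorm_def
  using assms by (intro mult_nonneg_nonneg sum_nonneg) (auto simp: mnl_prob_nonneg)

lemma bonus2_nonneg:
  assumes "finite (Sset s a)" "s' \<in> Sset s a"
  shows "0 \<le> bonus2 \<phi> Sset \<Sigma> \<beta> s a"
proof -
  have "(wnorm (matrix_inv \<Sigma>) (\<phi> s a s'))\<^sup>2
      \<le> Max ((\<lambda>s'. (wnorm (matrix_inv \<Sigma>) (\<phi> s a s'))\<^sup>2) ` Sset s a)"
    using assms by (intro Max_ge) auto
  then show ?thesis
    unfolding bonus2_def by (meson mult_nonneg_nonneg order_trans zero_le_numeral zero_le_power2)
qed

text \<open>The MNL model as an element of \<open>[0,1]\<^sup>S\<^sup>\<times>\<^sup>A\<^sup>\<times>\<^sup>S\<close>; off the reachable set \<open>mnl_prob\<close> need not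
  lie in \<open>[0,1]\<close>, so it is cut off there.\<close>
definition mnl_kernel ::
  "('s \<Rightarrow> 'a \<Rightarrow> 's \<Rightarrow> real^'d) \<Rightarrow> ('s \<Rightarrow> 'a \<Rightarrow> 's set) \<Rightarrow> real^'d \<Rightarrow> 's \<Rightarrow> 'a \<Rightarrow> 's \<Rightarrow> real" where
  "mnl_kernel \<phi> Sset \<theta> s a s' = (if s' \<in> Sset s a then mnl_prob \<phi> Sset \<theta> s a s' else 0)"

lemma mnl_kernel_mem_conf_set:
  assumes fin: "\<And>s a. finite (Sset s a)" and ne: "\<And>s a. Sset s a \<noteq> {}"
    and "0 \<le> \<beta>" "\<And>x. 0 \<le> x \<bullet> (matrix_inv \<Sigma> *v x)"
  shows "mnl_kernel \<phi> Sset \<theta> \<in> conf_set \<phi> Sset \<theta> \<Sigma> \<beta>"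
  unfolding conf_set_def
proof (intro CollectI conjI allI)
  fix s a s'
  show "0 \<le> mnl_kernel \<phi> Sset \<theta> s a s'" "mnl_kernel \<phi> Sset \<theta> s a s' \<le> 1"
    using mnl_prob_le_1[of Sset s a, OF fin] by (auto simp: mnl_kernel_def mnl_prob_nonneg)
next
  fix s a
  show "(\<Sum>s'\<in>Sset s a. mnl_kernel \<phi> Sset \<theta> s a s') = 1"
    using sum_mnl_prob[of Sset s a, OF fin ne] by (simp add: mnl_kernel_def)
  obtain s' where "s' \<in> Sset s a"
    using ne by blast
  then show "(\<Sum>s'\<in>Sset s a. \<bar>mnl_kernel \<phi> Sset \<theta> s a s' - mnl_prob \<phi> Sset \<theta> s a s'\<bar>)
      \<le> bonus1 \<phi> Sset \<theta> \<Sigma> \<beta> s a + bonus2 \<phi> Sset \<Sigma> \<beta> s a"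
    by (simp add: mnl_kernel_def)
      (intro add_nonneg_nonneg bonus1_nonneg[OF assms(3,4)] bonus2_nonneg[of Sset s a, OF fin])
qed

lemma design_matrix_pos_def:
  fixes \<Sigma> :: "nat \<Rightarrow> real^'d^'d"
  assumes fin: "\<And>s a. finite (Sset s a)" and ne: "\<And>s a. Sset s a \<noteq> {}"
    and "lam > 0" and init: "\<Sigma> 1 = lam *\<^sub>R mat 1"
    and upd: "\<And>t. t \<ge> 1 \<Longrightarrow> \<Sigma> (Suc t) = \<Sigma> t + mnl_hessian \<phi> Sset (\<theta>hat (Suc t)) (sta t) (act t)"
    and "1 \<le> u" "x \<noteq> 0"
  shows "0 < x \<bullet> (\<Sigma> u *v x)"
proof -
  have "lam * (x \<bullet> x) \<le> x \<bullet> (\<Sigma> u *v x)"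
    using \<open>1 \<le> u\<close>
  proof (induction u rule: dec_induct)
    case base
    show ?case
      unfolding init by (simp flip: scaleR_matrix_vector_assoc)
  next
    case (step u)
    have "0 \<le> x \<bullet> (mnl_hessian \<phi> Sset (\<theta>hat (Suc u)) (sta u) (act u) *v x)"
      using fin ne by (rule mnl_hessian_psd)
    then show ?case
      using step by (simp add: upd matrix_vector_mult_add_rdistrib inner_add_right)
  qed
  moreover have "0 < lam * (x \<bullet> x)"
    using \<open>lam > 0\<close> \<open>x \<noteq> 0\<close> by simp
  ultimately show ?thesis
    by linarith
qed

theorem lemma5:
  fixes \<phi> :: "'s::finite \<Rightarrow> 'a::finite \<Rightarrow> 's \<Rightarrow> real^'d"
    and Sset :: "'s \<Rightarrow> 'a \<Rightarrow> 's set"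
    and r :: "'s \<Rightarrow> 'a \<Rightarrow> real"
    and \<gamma> lam L\<theta> :: real
    and N T :: nat
    and \<theta>star :: "real^'d"
    and \<theta>hat :: "nat \<Rightarrow> real^'d"
    and \<Sigma> :: "nat \<Rightarrow> real^'d^'d"
    and \<beta> :: "nat \<Rightarrow> real"
    and tk :: "nat \<Rightarrow> nat"
    and sta :: "nat \<Rightarrow> 's"
    and act :: "nat \<Rightarrow> 'a"
    and k t :: nat
  assumes Sset_ne: "\<And>s a. Sset s a \<noteq> {}"
    and r_range: "\<And>s a. 0 \<le> r s a \<and> r s a \<le> 1"
    and gamma: "0 \<le> \<gamma>" "\<gamma> < 1"
    and lambda: "lam > 0"
    and beta_pos: "\<And>t. \<beta> t > 0"
    and theta_bound: "norm \<theta>star \<le> L\<theta>"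
    and Sigma_init: "\<Sigma> 1 = lam *\<^sub>R mat 1"
    and Sigma_upd: "\<And>t. t \<ge> 1 \<Longrightarrow>
          \<Sigma> (Suc t) = \<Sigma> t + mnl_hessian \<phi> Sset (\<theta>hat (Suc t)) (sta t) (act t)"
    and transitions: "\<And>t. t \<ge> 1 \<Longrightarrow> sta (Suc t) \<in> Sset (sta t) (act t)"
    and ep_start: "tk 0 = 1"
    and ep_mono: "\<And>j. tk j < tk (Suc j)"
    and ep_within: "\<And>j u. tk j < u \<Longrightarrow> u < tk (Suc j) \<Longrightarrow> det (\<Sigma> u) \<le> 2 * det (\<Sigma> (tk j))"
    and ep_switch: "\<And>j. tk (Suc j) \<le> T \<Longrightarrow> det (\<Sigma> (tk (Suc j))) > 2 * det (\<Sigma> (tk j))"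
    and greedy: "\<And>j u b. tk j \<le> u \<Longrightarrow> u < tk (Suc j) \<Longrightarrow>
          devi_Q \<gamma> (conf_set \<phi> Sset (\<theta>hat (tk j)) (\<Sigma> (tk j)) (\<beta> (tk j))) Sset r N (sta u) b
          \<le> devi_Q \<gamma> (conf_set \<phi> Sset (\<theta>hat (tk j)) (\<Sigma> (tk j)) (\<beta> (tk j))) Sset r N (sta u) (act u)"
    and confidence: "\<And>u. 1 \<le> u \<Longrightarrow> u \<le> T \<Longrightarrow> wnorm (\<Sigma> u) (\<theta>hat u - \<theta>star) \<le> \<beta> u"
    and t_range: "tk k \<le> t" "t < tk (Suc k) - 1"
  shows "devi_Q \<gamma> (conf_set \<phi> Sset (\<theta>hat (tk k)) (\<Sigma> (tk k)) (\<beta> (tk k))) Sset r N (sta t) (act t)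
     \<le> r (sta t) (act t)
        + \<gamma> * opt_backup (conf_set \<phi> Sset (\<theta>hat (tk k)) (\<Sigma> (tk k)) (\<beta> (tk k))) Sset
              (Vof (devi_Q \<gamma> (conf_set \<phi> Sset (\<theta>hat (tk k)) (\<Sigma> (tk k)) (\<beta> (tk k))) Sset r N))
              (sta t) (act t)
        + \<gamma> ^ N"
proof -
  let ?P = "conf_set \<phi> Sset (\<theta>hat (tk k)) (\<Sigma> (tk k)) (\<beta> (tk k))"
  have "1 \<le> tk k"
    using ep_start ep_mono by (metis le0 lift_Suc_mono_le less_imp_le)
  then have "0 \<le> x \<bullet> (matrix_inv (\<Sigma> (tk k)) *v x)" for x
    by (intro matrix_inv_psd_if_pos_def design_matrix_pos_def[OF _ Sset_ne lambda Sigma_init Sigma_upd]) auto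
  then have "mnl_kernel \<phi> Sset (\<theta>hat (tk k)) \<in> ?P"
    using beta_pos[of "tk k"] by (intro mnl_kernel_mem_conf_set Sset_ne) auto
  then have "?P \<noteq> {}"
    by blast
  from devi_Q_le_Suc_plus[OF this stochastic_kernels_conf_set] r_range gamma
  show ?thesis
    by simp
qed

end
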